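(* Let $X$ be a CRSM on $E$ with extremal coefficient functional $\theta$, and let $K,K_1,K_2,\ldots\in\mathcal K$. Then $X(K_n)\to X(K)$ in probability as $n\to\infty$ if and only if $\theta(K_n)\to\theta(K)$ and $\theta(K_n\cup K)\to\theta(K)$.
   Context: $E$ is a locally compact Hausdorff second countable space; $\mathcal K$ its compact subsets. A sup-measure on $E$ is a Choquet capacity $\varphi$ (non-decreasing, $\varphi(\emptyset)=0$, $\varphi(A_n)\uparrow\varphi(A)$ if $A_n\uparrow A$, $\varphi(K_n)\downarrow\varphi(K)$ for compact $K_n\downarrow K$), finite on compacts, with $\varphi(\bigcup_j G_j)=\sup_j\varphi(G_j)$ for all families of open sets; a random sup-measure is a random element of the space of sup-measures (Borel $\sigma$-algebra of the sup-vague topology). $\mathrm{USC}$: bounded non-negative upper semicontinuous functions with relatively compact support. Extremal integral $\int^e f\,d\varphi=\sup\{\varphi(K)\inf_{x\in K}f(x):K\in\mathcal K\}$. Unit Fréchet with scale $a\ge0$: distribution function $\exp(-a/t)$, $t>0$. $X$ is max-stable if $\bigvee_iu_iX(K_i)$ is unit Fréchet for all $K_i\in\mathcal K$, $u_i\ge0$; tail dependence functional $\ell(f)$ = scale of $\int^e f\,dX$; extremal coefficient functional $\theta(K)=\ell(\mathbf 1_K)$. $X$ is a CRSM if it is max-stable and $\ell(f+g)=\ell(f)+\ell(g)$ for all $f,g\in\mathrm{USC}$ with $(f(x)-f(y))(g(x)-g(y))\ge0$ for all $x,y$. *)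

theory Defs
  imports "HOL-Probability.Probability"
begin

definition sup_measure :: "('a::topological_space set \<Rightarrow> ennreal) \<Rightarrow> bool" where
  "sup_measure \<phi> \<longleftrightarrow>
     \<phi> {} = 0
   \<and> (\<forall>A B. A \<subseteq> B \<longrightarrow> \<phi> A \<le> \<phi> B)
   \<and> (\<forall>A :: nat \<Rightarrow> 'a set. incseq A \<longrightarrow> (\<lambda>n. \<phi> (A n)) \<longlonglongrightarrow> \<phi> (\<Union>n. A n))
   \<and> (\<forall>K :: nat \<Rightarrow> 'a set. decseq K \<and> (\<forall>n. compact (K n))
        \<longrightarrow> (\<lambda>n. \<phi> (K n)) \<longlonglongrightarrow> \<phi> (\<Inter>n. K n))
   \<and> (\<forall>K. compact K \<longrightarrow> \<phi> K < \<top>)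
   \<and> (\<forall>\<G>. (\<forall>G\<in>\<G>. open G) \<longrightarrow> \<phi> (\<Union>\<G>) = (SUP G\<in>\<G>. \<phi> G))"

definition supvague_subbasis :: "('a::topological_space set \<Rightarrow> ennreal) set set" where
  "supvague_subbasis =
     {{m \<in> Collect sup_measure. m K < ennreal x} | K x. compact K}
   \<union> {{m \<in> Collect sup_measure. m G > ennreal x} | G x. open G}"

definition supvague_topology :: "('a::topological_space set \<Rightarrow> ennreal) topology" where
  "supvague_topology = topology_generated_by supvague_subbasis"

definition supmeasure_space :: "('a::topological_space set \<Rightarrow> ennreal) measure" where
  "supmeasure_space = sigma (Collect sup_measure) {U. openin supvague_topology U}"

definition random_supmeasure :: "'w measure \<Rightarrow> ('w \<Rightarrow> 'a::topological_space set \<Rightarrow> ennreal) \<Rightarrow> bool" where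
  "random_supmeasure M X \<longleftrightarrow> X \<in> M \<rightarrow>\<^sub>M supmeasure_space"

definition ext_integral :: "('a::topological_space set \<Rightarrow> ennreal) \<Rightarrow> ('a \<Rightarrow> real) \<Rightarrow> ennreal" where
  "ext_integral \<phi> f = (SUP K\<in>{K. compact K}. \<phi> K * (INF x\<in>K. ennreal (f x)))"

definition upper_semicont :: "('a::topological_space \<Rightarrow> real) \<Rightarrow> bool" where
  "upper_semicont f \<longleftrightarrow> (\<forall>x t. f x < t \<longrightarrow> (\<forall>\<^sub>F y in nhds x. f y < t))"

definition USC :: "('a::topological_space \<Rightarrow> real) set" where
  "USC = {f. bounded (range f) \<and> (\<forall>x. 0 \<le> f x) \<and> upper_semicont f
             \<and> compact (closure {x. f x \<noteq> 0})}"

definition frechet :: "'w measure \<Rightarrow> ('w \<Rightarrow> ennreal) \<Rightarrow> real \<Rightarrow> bool" where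
  "frechet M Y a \<longleftrightarrow> 0 \<le> a \<and> Y \<in> borel_measurable M
     \<and> (\<forall>t::real. t > 0 \<longrightarrow> measure M {\<omega> \<in> space M. Y \<omega> \<le> ennreal t} = exp (- a / t))"

definition max_stable :: "'w measure \<Rightarrow> ('w \<Rightarrow> 'a::topological_space set \<Rightarrow> ennreal) \<Rightarrow> bool" where
  "max_stable M X \<longleftrightarrow> random_supmeasure M X \<and>
     (\<forall>(n::nat) (K :: nat \<Rightarrow> 'a set) (u :: nat \<Rightarrow> real).
        (\<forall>i<n. compact (K i) \<and> 0 \<le> u i) \<longrightarrow>
        (\<exists>a. frechet M (\<lambda>\<omega>. SUP i\<in>{..<n}. ennreal (u i) * X \<omega> (K i)) a))"

definition tdf :: "'w measure \<Rightarrow> ('w \<Rightarrow> 'a::topological_space set \<Rightarrow> ennreal) \<Rightarrow> ('a \<Rightarrow> real) \<Rightarrow> real" where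
  "tdf M X f = (THE a. frechet M (\<lambda>\<omega>. ext_integral (X \<omega>) f) a)"

definition ecf :: "'w measure \<Rightarrow> ('w \<Rightarrow> 'a::topological_space set \<Rightarrow> ennreal) \<Rightarrow> 'a set \<Rightarrow> real" where
  "ecf M X K = tdf M X (indicator K)"

definition CRSM :: "'w measure \<Rightarrow> ('w \<Rightarrow> 'a::topological_space set \<Rightarrow> ennreal) \<Rightarrow> bool" where
  "CRSM M X \<longleftrightarrow> max_stable M X \<and>
     (\<forall>f\<in>USC. \<forall>g\<in>USC. (\<forall>x y. 0 \<le> (f x - f y) * (g x - g y)) \<longrightarrow>
        tdf M X (\<lambda>x. f x + g x) = tdf M X f + tdf M X g)"

definition conv_in_prob :: "'w measure \<Rightarrow> (nat \<Rightarrow> 'w \<Rightarrow> real) \<Rightarrow> ('w \<Rightarrow> real) \<Rightarrow> bool" where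
  "conv_in_prob M Y Z \<longleftrightarrow>
     (\<forall>\<epsilon>>0. (\<lambda>n. measure M {\<omega> \<in> space M. \<bar>Y n \<omega> - Z \<omega>\<bar> > \<epsilon>}) \<longlonglongrightarrow> 0)"

end

theory Submission
  imports Defs
begin

text \<open>
  Pointwise, \<open>X(K\<^sub>n \<union> K) = max (X(K\<^sub>n), X(K))\<close>: a sup-measure is maxitive on open sets, and
  on compact sets by continuity along decreasing compact neighbourhoods (which exist by local
  compactness and second countability). By max-stability \<open>X(K\<^sub>n)\<close>, \<open>X(K)\<close> and \<open>X(K\<^sub>n \<union> K)\<close> are
  Fr\'echet with scales \<open>\<theta>(K\<^sub>n)\<close>, \<open>\<theta>(K)\<close>, \<open>\<theta>(K\<^sub>n \<union> K)\<close>. Convergence in probability forces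
  convergence of the distribution functions at \<open>1\<close>, hence of the scales. Conversely, if
  \<open>V \<le> W\<close> are Fr\'echet with asymptotically equal scales, then \<open>W - V \<rightarrow> 0\<close> in probability,
  because a gap larger than \<open>\<epsilon>\<close> is witnessed on a finite grid of mesh \<open>< \<epsilon>\<close> where the two
  distribution functions nearly agree; and \<open>|X(K\<^sub>n) - X(K)|\<close> is bounded by the two gaps
  \<open>X(K\<^sub>n \<union> K) - X(K)\<close> and \<open>X(K\<^sub>n \<union> K) - X(K\<^sub>n)\<close>.
\<close>

section \<open>Compact sets in locally compact second countable spaces\<close>

lemma compact_closure_subset:
  assumes "compact (closure U)" "V \<subseteq> U"
  shows "compact (closure V)"
proof -
  have "closure V \<subseteq> closure U" using assms(2) by (rule closure_mono)
  then have "closure U \<inter> closure V = closure V" by blast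
  with compact_Int_closed[OF assms(1) closed_closure[of V]] show ?thesis by simp
qed

lemma Hausdorff_space_euclidean_t2 [simp]: "Hausdorff_space (euclidean :: 'a::t2_space topology)"
  unfolding Hausdorff_space_def disjnt_def by (metis open_openin separation_t2)

lemma open_superset_compact_closure:
  fixes K :: "'a::t2_space set"
  assumes lc: "locally_compact_space (euclidean :: 'a topology)" and K: "compact K"
  obtains U where "open U" "K \<subseteq> U" "compact (closure U)"
proof -
  from lc K obtain U L where "open U" "compact L" "closed L" "K \<subseteq> U" "U \<subseteq> L"
    by (auto simp: locally_compact_space_compact_closed_compact compactin_euclidean_iff)
  moreover have "closure L = L" using \<open>closed L\<close> by simp
  ultimately show ?thesis
    using that compact_closure_subset[of L U] by metis
qed

lemma open_superset_compact_closure_avoiding: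
  fixes K :: "'a::t2_space set"
  assumes lc: "locally_compact_space (euclidean :: 'a topology)" and K: "compact K" and y: "y \<notin> K"
  obtains U where "open U" "K \<subseteq> U" "compact (closure U)" "y \<notin> closure U"
proof -
  obtain U0 where U0: "open U0" "K \<subseteq> U0" "compact (closure U0)"
    using open_superset_compact_closure[OF lc K] by blast
  obtain S T where ST: "open S" "open T" "K \<subseteq> S" "y \<in> T" "S \<inter> T = {}"
    using Hausdorff_space_compact_separation[OF Hausdorff_space_euclidean_t2, of K "{y}"] K y
    by (auto simp: compactin_euclidean_iff disjnt_def)
  have "closure (U0 \<inter> S) \<subseteq> - T"
    using ST by (intro closure_minimal) auto
  then show ?thesis
    using that[of "U0 \<inter> S"] U0 ST compact_closure_subset[OF U0(3)] by auto
qed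

lemma compact_eq_Inter_closures_decseq:
  fixes K :: "'a::{t2_space,second_countable_topology} set"
  assumes lc: "locally_compact_space (euclidean :: 'a topology)" and K: "compact K"
  obtains U :: "nat \<Rightarrow> 'a set" where "\<And>n. open (U n)" "\<And>n. K \<subseteq> U n"
    "\<And>n. compact (closure (U n))" "decseq U" "(\<Inter>n. closure (U n)) = K"
proof -
  define \<U> where "\<U> = {U. open U \<and> K \<subseteq> U \<and> compact (closure U)}"
  obtain U0 where "open U0" "K \<subseteq> U0" "compact (closure U0)"
    using open_superset_compact_closure[OF lc K] .
  then have U0: "U0 \<in> \<U>" unfolding \<U>_def by blast
  have cover: "- K \<subseteq> \<Union>((\<lambda>U. - closure U) ` \<U>)"
  proof
    fix y assume "y \<in> - K"
    then have "y \<notin> K" by simp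
    then obtain U where "open U" "K \<subseteq> U" "compact (closure U)" "y \<notin> closure U"
      by (rule open_superset_compact_closure_avoiding[OF lc K])
    then show "y \<in> \<Union>((\<lambda>U. - closure U) ` \<U>)" unfolding \<U>_def by blast
  qed
  obtain \<F> where \<F>: "\<F> \<subseteq> (\<lambda>U. - closure U) ` \<U>" "countable \<F>"
      "\<Union>\<F> = \<Union>((\<lambda>U. - closure U) ` \<U>)"
    using Lindelof[of "(\<lambda>U. - closure U) ` \<U>"] by (auto intro: open_Compl)
  obtain \<V> where \<V>: "countable \<V>" "\<V> \<subseteq> \<U>" "\<F> = (\<lambda>U. - closure U) ` \<V>"
    using countable_subset_image[of \<F> "\<lambda>U. - closure U" \<U>] \<F> by blast
  define W where "W = from_nat_into (insert U0 \<V>)"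
  have rW: "range W = insert U0 \<V>"
    unfolding W_def using \<V>(1) by (simp add: range_from_nat_into)
  then have W: "open (W n)" "K \<subseteq> W n" "compact (closure (W n))" for n
    using U0 \<V>(2) rangeI[of W n] unfolding \<U>_def by auto
  define U where "U n = (\<Inter>i\<le>n. W i)" for n
  have UW: "U n \<subseteq> W m" if "m \<le> n" for m n
    unfolding U_def using that by auto
  have KU: "K \<subseteq> U n" for n
    using W(2) unfolding U_def by auto
  have "(\<Inter>n. closure (U n)) \<subseteq> K"
  proof
    fix y assume y: "y \<in> (\<Inter>n. closure (U n))"
    show "y \<in> K"
    proof (rule ccontr)
      assume "y \<notin> K"
      then obtain V where "V \<in> \<V>" "y \<notin> closure V"
        using cover unfolding \<F>(3)[symmetric] \<V>(3) by auto
      moreover obtain m where "V = W m" using rW \<open>V \<in> \<V>\<close> by (metis insertCI rangeE)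
      ultimately show False
        using y closure_mono[OF UW[of m m]] by auto
    qed
  qed
  moreover have "K \<subseteq> (\<Inter>n. closure (U n))"
    using KU closure_subset by blast
  moreover have "open (U n)" for n
    using W(1) unfolding U_def by auto
  moreover have "compact (closure (U n))" for n
    using compact_closure_subset[OF W(3) UW[OF le0]] .
  moreover have "decseq U"
    unfolding decseq_def U_def by auto
  ultimately show ?thesis
    using that KU by blast
qed

section \<open>Sup-measures\<close>

lemma sup_measure_empty: "sup_measure \<phi> \<Longrightarrow> \<phi> {} = 0"
  unfolding sup_measure_def by simp

lemma sup_measure_mono:
  assumes "sup_measure \<phi>" "A \<subseteq> B" shows "\<phi> A \<le> \<phi> B"
  using assms(1) unfolding sup_measure_def by (simp add: assms(2))

lemma sup_measure_compact_finite: "sup_measure \<phi> \<Longrightarrow> compact K \<Longrightarrow> \<phi> K < \<top>"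
  unfolding sup_measure_def by simp

lemma sup_measure_decseq_compact:
  assumes "sup_measure \<phi>" "decseq K" "\<And>n. compact (K n)"
  shows "(\<lambda>n. \<phi> (K n)) \<longlonglongrightarrow> \<phi> (\<Inter>n. K n)"
  using assms unfolding sup_measure_def by simp

lemma sup_measure_Un_open:
  assumes "sup_measure \<phi>" "open U" "open V"
  shows "\<phi> (U \<union> V) = max (\<phi> U) (\<phi> V)"
proof -
  have "\<phi> (\<Union>{U, V}) = (SUP G\<in>{U, V}. \<phi> G)"
    using assms unfolding sup_measure_def by (metis insert_iff singletonD)
  then show ?thesis by (simp add: sup_max)
qed

lemma sup_measure_Un_compact:
  fixes A B :: "'a::{t2_space,second_countable_topology} set"
  assumes lc: "locally_compact_space (euclidean :: 'a topology)" and \<phi>: "sup_measure \<phi>"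
    and A: "compact A" and B: "compact B"
  shows "\<phi> (A \<union> B) = max (\<phi> A) (\<phi> B)"
proof (rule antisym)
  obtain U where U: "\<And>n. open (U n)" "\<And>n. A \<subseteq> U n"
    "\<And>n. compact (closure (U n))" "decseq U" "(\<Inter>n. closure (U n)) = A"
    using compact_eq_Inter_closures_decseq[OF lc A] by metis
  obtain V where V: "\<And>n. open (V n)" "\<And>n. B \<subseteq> V n"
    "\<And>n. compact (closure (V n))" "decseq V" "(\<Inter>n. closure (V n)) = B"
    using compact_eq_Inter_closures_decseq[OF lc B] by metis
  have "(\<lambda>n. \<phi> (closure (U n))) \<longlonglongrightarrow> \<phi> A"
    using sup_measure_decseq_compact[OF \<phi>, of "\<lambda>n. closure (U n)"] U(3,4,5)
    by (simp add: decseq_def closure_mono)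
  moreover have "(\<lambda>n. \<phi> (closure (V n))) \<longlonglongrightarrow> \<phi> B"
    using sup_measure_decseq_compact[OF \<phi>, of "\<lambda>n. closure (V n)"] V(3,4,5)
    by (simp add: decseq_def closure_mono)
  moreover have "\<phi> (A \<union> B) \<le> max (\<phi> (closure (U n))) (\<phi> (closure (V n)))" for n
  proof -
    have "\<phi> (A \<union> B) \<le> \<phi> (U n \<union> V n)"
      using U(2) V(2) by (intro sup_measure_mono[OF \<phi>]) auto
    also have "\<dots> = max (\<phi> (U n)) (\<phi> (V n))"
      using sup_measure_Un_open[OF \<phi> U(1) V(1)] .
    also have "\<dots> \<le> max (\<phi> (closure (U n))) (\<phi> (closure (V n)))"
      by (intro max.mono sup_measure_mono[OF \<phi>] closure_subset)
    finally show ?thesis .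
  qed
  ultimately show "\<phi> (A \<union> B) \<le> max (\<phi> A) (\<phi> B)"
    by (intro LIMSEQ_le_const[OF tendsto_max]) auto
qed (auto intro: sup_measure_mono[OF \<phi>])

lemma ext_integral_indicator:
  assumes \<phi>: "sup_measure \<phi>" and K: "compact K"
  shows "ext_integral \<phi> (indicator K) = \<phi> K"
  unfolding ext_integral_def
proof (rule antisym)
  show "(SUP L\<in>{L. compact L}. \<phi> L * (INF x\<in>L. ennreal (indicator K x))) \<le> \<phi> K"
  proof (rule SUP_least)
    fix L :: "'a set"
    consider "L = {}" | "L \<noteq> {}" "L \<subseteq> K" | x where "x \<in> L" "x \<notin> K" by blast
    then show "\<phi> L * (INF x\<in>L. ennreal (indicator K x)) \<le> \<phi> K"
    proof cases
      case 1
      then show ?thesis using sup_measure_empty[OF \<phi>] by simp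
    next
      case 2
      then have "(INF x\<in>L. ennreal (indicator K x)) = 1"
        by (simp add: subset_iff indicator_def cong: INF_cong)
      then show ?thesis using sup_measure_mono[OF \<phi> \<open>L \<subseteq> K\<close>] by simp
    next
      case 3
      then have "(INF x\<in>L. ennreal (indicator K x)) = 0"
        by (intro antisym INF_lower2[of x]) auto
      then show ?thesis by simp
    qed
  qed
  show "\<phi> K \<le> (SUP L\<in>{L. compact L}. \<phi> L * (INF x\<in>L. ennreal (indicator K x)))"
  proof (cases "K = {}")
    case True
    then show ?thesis using sup_measure_empty[OF \<phi>] by simp
  next
    case False
    then have "(INF x\<in>K. ennreal (indicator K x)) = 1"
      by (simp add: indicator_def cong: INF_cong)
    then show ?thesis using K by (intro SUP_upper2[of K]) auto
  qed
qed

section \<open>Fr\'echet random variables\<close>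

definition real_frechet :: "'w measure \<Rightarrow> ('w \<Rightarrow> real) \<Rightarrow> real \<Rightarrow> bool" where
  "real_frechet M Y a \<longleftrightarrow> Y \<in> borel_measurable M \<and> (\<forall>\<omega>\<in>space M. 0 \<le> Y \<omega>) \<and> 0 \<le> a
     \<and> (\<forall>t>0. measure M {\<omega>\<in>space M. Y \<omega> \<le> t} = exp (- a / t))"

lemma real_frechet_measurable [measurable_dest]:
  "real_frechet M Y a \<Longrightarrow> Y \<in> borel_measurable M"
  unfolding real_frechet_def by simp

lemma real_frechet_cdf:
  "real_frechet M Y a \<Longrightarrow> t > 0 \<Longrightarrow> measure M {\<omega>\<in>space M. Y \<omega> \<le> t} = exp (- a / t)"
  unfolding real_frechet_def by simp

lemma (in prob_space) prob_below_le_shifted: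
  fixes Y Z :: "'a \<Rightarrow> real"
  assumes [measurable]: "Y \<in> borel_measurable M" "Z \<in> borel_measurable M"
  shows "prob {\<omega>\<in>space M. Y \<omega> \<le> s}
    \<le> prob {\<omega>\<in>space M. Z \<omega> \<le> s + d} + prob {\<omega>\<in>space M. d < \<bar>Y \<omega> - Z \<omega>\<bar>}"
proof -
  have "prob {\<omega>\<in>space M. Y \<omega> \<le> s}
      \<le> prob ({\<omega>\<in>space M. Z \<omega> \<le> s + d} \<union> {\<omega>\<in>space M. d < \<bar>Y \<omega> - Z \<omega>\<bar>})"
  proof (rule finite_measure_mono)
    show "{\<omega>\<in>space M. Z \<omega> \<le> s + d} \<union> {\<omega>\<in>space M. d < \<bar>Y \<omega> - Z \<omega>\<bar>} \<in> events"
      by measurable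
  qed (auto simp: abs_real_def)
  also have "\<dots> \<le> prob {\<omega>\<in>space M. Z \<omega> \<le> s + d} + prob {\<omega>\<in>space M. d < \<bar>Y \<omega> - Z \<omega>\<bar>}"
    by (intro measure_Un_le) measurable
  finally show ?thesis .
qed

lemma (in prob_space) frechet_scales_tendsto_of_conv_in_prob:
  assumes Y: "\<And>n. real_frechet M (Y n) (a n)" and Z: "real_frechet M Z b"
    and YZ: "conv_in_prob M Y Z"
  shows "a \<longlonglongrightarrow> b"
proof -
  define q where "q n d = prob {\<omega>\<in>space M. d < \<bar>Y n \<omega> - Z \<omega>\<bar>}" for n d
  have upper: "exp (- a n) \<le> exp (- b / (1 + d)) + q n d" if "0 < d" for n d
    using prob_below_le_shifted[of "Y n" Z 1 d] real_frechet_cdf[OF Y[of n], of 1]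
      real_frechet_cdf[OF Z, of "1 + d"] that Y Z unfolding q_def by simp
  have lower: "exp (- b / (1 - d)) \<le> exp (- a n) + q n d" if "0 < d" "d < 1" for n d
    using prob_below_le_shifted[of Z "Y n" "1 - d" d] real_frechet_cdf[OF Y[of n], of 1]
      real_frechet_cdf[OF Z, of "1 - d"] that Y Z unfolding q_def by (simp add: abs_minus_commute)
  have "(\<lambda>n. exp (- a n)) \<longlonglongrightarrow> exp (- b)"
  proof (rule LIMSEQ_I)
    fix e :: real assume "0 < e"
    have "(\<lambda>s. exp (- b / s)) \<midarrow>1\<rightarrow> exp (- b)"
      by (auto intro!: tendsto_eq_intros)
    with \<open>0 < e\<close> obtain s where s: "s > 0"
      "\<And>x. x \<noteq> 1 \<Longrightarrow> \<bar>x - 1\<bar> < s \<Longrightarrow> \<bar>exp (- b / x) - exp (- b)\<bar> < e / 2"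
      by (force dest: LIM_D[of _ _ _ "e / 2"])
    define d where "d = min (s / 2) (1 / 2)"
    have d: "0 < d" "d < 1" "d < s" using s unfolding d_def by auto
    have "(\<lambda>n. q n d) \<longlonglongrightarrow> 0" using YZ d unfolding q_def conv_in_prob_def by auto
    then have "\<forall>\<^sub>F n in sequentially. q n d < e / 2"
      using \<open>0 < e\<close> by (intro order_tendstoD(2)) auto
    then obtain N where N: "\<And>n. n \<ge> N \<Longrightarrow> q n d < e / 2"
      by (auto simp: eventually_sequentially)
    have "\<bar>exp (- b / (1 + d)) - exp (- b)\<bar> < e / 2" "\<bar>exp (- b / (1 - d)) - exp (- b)\<bar> < e / 2"
      using s(2)[of "1 + d"] s(2)[of "1 - d"] d by auto
    then have "\<bar>exp (- a n) - exp (- b)\<bar> < e" if "n \<ge> N" for n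
      using upper[OF d(1), of n] lower[OF d(1,2), of n] N[OF that] by arith
    then show "\<exists>N. \<forall>n\<ge>N. norm (exp (- a n) - exp (- b)) < e" by auto
  qed
  then have "(\<lambda>n. ln (exp (- a n))) \<longlonglongrightarrow> ln (exp (- b))"
    by (rule tendsto_ln) simp
  then show ?thesis
    using tendsto_minus_cancel[of a b] by simp
qed

lemma grid_point_between:
  fixes v T \<epsilon> :: real and N :: nat
  assumes "0 \<le> v" "v \<le> T" "T > 0" "N \<ge> 1" "T / N < \<epsilon>"
  obtains i where "i \<in> {1..N}" "v \<le> i * T / N" "i * T / N < v + \<epsilon>"
proof -
  define i where "i = max 1 (nat \<lceil>v * N / T\<rceil>)"
  have N: "real N > 0" using assms(4) by simp
  have "v * N / T \<le> N" using assms(2,3) N by (simp add: field_simps)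
  then have "i \<in> {1..N}" unfolding i_def using assms(4) by (auto simp: nat_le_iff ceiling_le_iff)
  moreover have "v \<le> i * T / N"
  proof -
    have "v * N / T \<le> i" unfolding i_def by linarith
    then show ?thesis using assms(3) N by (simp add: field_simps)
  qed
  moreover have "i * T / N < v + \<epsilon>"
  proof (cases "i = 1")
    case True
    then show ?thesis using assms(1,5) by simp
  next
    case False
    then have "i < v * N / T + 1" unfolding i_def by linarith
    then have "i * T / N < v + T / N" using assms(3) N by (simp add: field_simps)
    then show ?thesis using assms(5) by linarith
  qed
  ultimately show ?thesis by (rule that)
qed

text \<open>If \<open>V \<le> W\<close> and \<open>W - V > \<epsilon>\<close>, then either \<open>V > T\<close>, or some grid point \<open>t\<close> of mesh
  \<open>T / N < \<epsilon>\<close> separates them: \<open>V \<le> t < W\<close>. The probability of the latter event is the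
  difference of the two distribution functions at \<open>t\<close>.\<close>
lemma (in prob_space) prob_frechet_gap_le:
  fixes N :: nat and T :: real
  assumes V: "real_frechet M V d" and W: "real_frechet M W c"
    and le: "\<And>\<omega>. \<omega> \<in> space M \<Longrightarrow> V \<omega> \<le> W \<omega>"
    and T: "T > 0" and N: "N \<ge> 1" "T / N < \<epsilon>"
  shows "prob {\<omega>\<in>space M. \<epsilon> < W \<omega> - V \<omega>}
    \<le> d / T + (\<Sum>i=1..N. exp (- d / (i * T / N)) - exp (- c / (i * T / N)))"
proof -
  define t :: "nat \<Rightarrow> real" where "t i = i * T / N" for i
  have t: "t i > 0" if "i \<in> {1..N}" for i using that T unfolding t_def by auto
  define A where "A i = {\<omega>\<in>space M. V \<omega> \<le> t i} - {\<omega>\<in>space M. W \<omega> \<le> t i}" for i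
  define B where "B = {\<omega>\<in>space M. T < V \<omega>}"
  have [measurable]: "A i \<in> events" for i unfolding A_def using V W by measurable
  have [measurable]: "B \<in> events" unfolding B_def using V by measurable
  have "{\<omega>\<in>space M. \<epsilon> < W \<omega> - V \<omega>} \<subseteq> B \<union> (\<Union>i\<in>{1..N}. A i)"
  proof
    fix \<omega> assume \<omega>: "\<omega> \<in> {\<omega>\<in>space M. \<epsilon> < W \<omega> - V \<omega>}"
    show "\<omega> \<in> B \<union> (\<Union>i\<in>{1..N}. A i)"
    proof (cases "T < V \<omega>")
      case True
      with \<omega> show ?thesis unfolding B_def by auto
    next
      case False
      moreover have "0 \<le> V \<omega>" using V \<omega> unfolding real_frechet_def by auto
      ultimately obtain i where "i \<in> {1..N}" "V \<omega> \<le> t i" "t i < V \<omega> + \<epsilon>"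
        using grid_point_between[OF _ _ T N] unfolding t_def by (metis not_less)
      with \<omega> show ?thesis unfolding A_def by force
    qed
  qed
  then have "prob {\<omega>\<in>space M. \<epsilon> < W \<omega> - V \<omega>} \<le> prob (B \<union> (\<Union>i\<in>{1..N}. A i))"
    by (intro finite_measure_mono) measurable
  also have "\<dots> \<le> prob B + (\<Sum>i=1..N. prob (A i))"
    using measure_Un_le[of B M "\<Union>i\<in>{1..N}. A i"] finite_measure_subadditive_finite[of "{1..N}" A]
    by fastforce
  also have "prob B \<le> d / T"
  proof -
    have "prob B = 1 - exp (- d / T)"
      using prob_neg[of "\<lambda>\<omega>. V \<omega> \<le> T"] real_frechet_cdf[OF V T] V
      unfolding B_def by (simp add: not_le)
    then show ?thesis using exp_ge_add_one_self[of "- d / T"] by linarith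
  qed
  also have "(\<Sum>i=1..N. prob (A i)) = (\<Sum>i=1..N. exp (- d / t i) - exp (- c / t i))"
  proof (rule sum.cong)
    fix i assume i: "i \<in> {1..N}"
    have "{\<omega>\<in>space M. W \<omega> \<le> t i} \<subseteq> {\<omega>\<in>space M. V \<omega> \<le> t i}"
      using le order_trans by blast
    then show "prob (A i) = exp (- d / t i) - exp (- c / t i)"
      unfolding A_def using finite_measure_Diff real_frechet_cdf[OF V t[OF i]]
        real_frechet_cdf[OF W t[OF i]] V W by simp
  qed simp
  finally show ?thesis unfolding t_def by simp
qed

lemma (in prob_space) prob_frechet_gap_tendsto_0:
  assumes V: "\<And>n. real_frechet M (V n) (d n)" and W: "\<And>n. real_frechet M (W n) (c n)"
    and le: "\<And>n \<omega>. \<omega> \<in> space M \<Longrightarrow> V n \<omega> \<le> W n \<omega>"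
    and d: "d \<longlonglongrightarrow> L" and c: "c \<longlonglongrightarrow> L" and "\<epsilon> > 0"
  shows "(\<lambda>n. prob {\<omega>\<in>space M. \<epsilon> < W n \<omega> - V n \<omega>}) \<longlonglongrightarrow> 0"
proof -
  have "\<forall>\<^sub>F n in sequentially. prob {\<omega>\<in>space M. \<epsilon> < W n \<omega> - V n \<omega>} < \<eta>" if "\<eta> > 0" for \<eta>
  proof -
    have "0 \<le> L" using d V by (intro LIMSEQ_le_const[OF d]) (auto simp: real_frechet_def)
    define T where "T = (L + 1) / \<eta>"
    have T: "T > 0" "L / T < \<eta>"
      using \<open>0 \<le> L\<close> \<open>\<eta> > 0\<close> unfolding T_def by (auto simp: field_simps)
    define N :: nat where "N = nat \<lceil>T / \<epsilon>\<rceil> + 1"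
    have "N \<ge> 1" unfolding N_def by simp
    have "T / \<epsilon> < N" unfolding N_def by linarith
    then have N: "N \<ge> 1" "T / N < \<epsilon>"
      using \<open>N \<ge> 1\<close> \<open>\<epsilon> > 0\<close> by (auto simp: field_simps)
    define R where
      "R n = d n / T + (\<Sum>i=1..N. exp (- d n / (i * T / N)) - exp (- c n / (i * T / N)))" for n
    have "R \<longlonglongrightarrow> L / T + (\<Sum>i=1..N. exp (- L / (i * T / N)) - exp (- L / (i * T / N)))"
      unfolding R_def using T(1) N(1) by (intro tendsto_intros d c) auto
    then have "\<forall>\<^sub>F n in sequentially. R n < \<eta>"
      using T(2) by (intro order_tendstoD(2)) auto
    then show ?thesis
    proof eventually_elim
      case (elim n)
      then show ?case
        using prob_frechet_gap_le[OF V[of n] W[of n] le[of _ n] T(1) N] unfolding R_def by linarith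
    qed
  qed
  then show ?thesis
    by (intro order_tendstoI) (auto intro!: always_eventually less_le_trans[OF _ measure_nonneg])
qed

lemma prob_tendsto_0_comparison:
  "(\<And>n. measure M (A n) \<le> f n) \<Longrightarrow> f \<longlonglongrightarrow> 0 \<Longrightarrow> (\<lambda>n. measure M (A n)) \<longlonglongrightarrow> 0"
  by (rule Lim_null_comparison[OF always_eventually]) simp_all

lemma (in prob_space) conv_in_prob_iff_frechet_scales:
  assumes Y: "\<And>n. real_frechet M (Y n) (a n)" and Z: "real_frechet M Z b"
    and W: "\<And>n. real_frechet M (W n) (c n)"
    and W_max: "\<And>n \<omega>. \<omega> \<in> space M \<Longrightarrow> W n \<omega> = max (Y n \<omega>) (Z \<omega>)"
  shows "conv_in_prob M Y Z \<longleftrightarrow> a \<longlonglongrightarrow> b \<and> c \<longlonglongrightarrow> b"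
proof -
  have [measurable]: "Y n \<in> borel_measurable M" "Z \<in> borel_measurable M" "W n \<in> borel_measurable M" for n
    using Y Z W by (simp_all add: real_frechet_measurable)
  have "conv_in_prob M W Z" if YZ: "conv_in_prob M Y Z"
    unfolding conv_in_prob_def
  proof safe
    fix \<epsilon> :: real assume "\<epsilon> > 0"
    have "prob {\<omega>\<in>space M. \<epsilon> < \<bar>W n \<omega> - Z \<omega>\<bar>} \<le> prob {\<omega>\<in>space M. \<epsilon> < \<bar>Y n \<omega> - Z \<omega>\<bar>}" for n
    proof (rule finite_measure_mono)
      show "{\<omega>\<in>space M. \<epsilon> < \<bar>Y n \<omega> - Z \<omega>\<bar>} \<in> events" by measurable
    qed (auto simp: W_max max_def abs_real_def split: if_splits)
    moreover have "(\<lambda>n. prob {\<omega>\<in>space M. \<epsilon> < \<bar>Y n \<omega> - Z \<omega>\<bar>}) \<longlonglongrightarrow> 0"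
      using YZ \<open>\<epsilon> > 0\<close> unfolding conv_in_prob_def by simp
    ultimately show "(\<lambda>n. prob {\<omega>\<in>space M. \<epsilon> < \<bar>W n \<omega> - Z \<omega>\<bar>}) \<longlonglongrightarrow> 0"
      by (rule prob_tendsto_0_comparison)
  qed
  moreover have "conv_in_prob M Y Z" if ab: "a \<longlonglongrightarrow> b" and cb: "c \<longlonglongrightarrow> b"
    unfolding conv_in_prob_def
  proof safe
    fix \<epsilon> :: real assume "\<epsilon> > 0"
    define gap where "gap n U = prob {\<omega>\<in>space M. \<epsilon> < W n \<omega> - U \<omega>}" for n U
    have bound: "prob {\<omega>\<in>space M. \<epsilon> < \<bar>Y n \<omega> - Z \<omega>\<bar>} \<le> gap n Z + gap n (Y n)" for n
    proof -
      have "prob {\<omega>\<in>space M. \<epsilon> < \<bar>Y n \<omega> - Z \<omega>\<bar>}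
          \<le> prob ({\<omega>\<in>space M. \<epsilon> < W n \<omega> - Z \<omega>} \<union> {\<omega>\<in>space M. \<epsilon> < W n \<omega> - Y n \<omega>})"
      proof (rule finite_measure_mono)
        show "{\<omega>\<in>space M. \<epsilon> < W n \<omega> - Z \<omega>} \<union> {\<omega>\<in>space M. \<epsilon> < W n \<omega> - Y n \<omega>} \<in> events"
          by measurable
      qed (auto simp: W_max max_def abs_real_def)
      also have "\<dots> \<le> gap n Z + gap n (Y n)"
        unfolding gap_def by (intro measure_Un_le) measurable
      finally show ?thesis .
    qed
    have "(\<lambda>n. gap n Z) \<longlonglongrightarrow> 0"
      unfolding gap_def using W_max
      by (intro prob_frechet_gap_tendsto_0[where V="\<lambda>_. Z", OF Z W _ tendsto_const cb \<open>\<epsilon> > 0\<close>]) simp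
    moreover have "(\<lambda>n. gap n (Y n)) \<longlonglongrightarrow> 0"
      unfolding gap_def using W_max
      by (intro prob_frechet_gap_tendsto_0[OF Y W _ ab cb \<open>\<epsilon> > 0\<close>]) simp
    ultimately have "(\<lambda>n. gap n Z + gap n (Y n)) \<longlonglongrightarrow> 0"
      by (rule tendsto_add_zero)
    with bound show "(\<lambda>n. prob {\<omega>\<in>space M. \<epsilon> < \<bar>Y n \<omega> - Z \<omega>\<bar>}) \<longlonglongrightarrow> 0"
      by (rule prob_tendsto_0_comparison)
  qed
  ultimately show ?thesis
    using frechet_scales_tendsto_of_conv_in_prob[where a=a, OF Y Z]
      frechet_scales_tendsto_of_conv_in_prob[where a=c, OF W Z] by blast
qed

section \<open>Max-stable random sup-measures\<close>

lemma max_stable_sup_measure: "max_stable M X \<Longrightarrow> \<omega> \<in> space M \<Longrightarrow> sup_measure (X \<omega>)"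
  unfolding max_stable_def random_supmeasure_def supmeasure_space_def
  by (metis measurable_space mem_Collect_eq space_measure_of_conv)

lemma frechet_cong:
  assumes "\<And>\<omega>. \<omega> \<in> space M \<Longrightarrow> F \<omega> = G \<omega>"
  shows "frechet M F a \<longleftrightarrow> frechet M G a"
proof -
  have "F \<in> borel_measurable M \<longleftrightarrow> G \<in> borel_measurable M"
    using assms by (rule measurable_cong)
  moreover have "{\<omega> \<in> space M. F \<omega> \<le> ennreal t} = {\<omega> \<in> space M. G \<omega> \<le> ennreal t}" for t
    using assms by auto
  ultimately show ?thesis unfolding frechet_def by simp
qed

lemma frechet_unique:
  assumes "frechet M Y a" "frechet M Y b" shows "a = b"
proof -
  have "exp (- a / 1) = exp (- b / 1)"
    using assms unfolding frechet_def by (metis zero_less_one)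
  then show ?thesis by simp
qed

lemma max_stable_frechet_ecf:
  assumes X: "max_stable M X" and C: "compact C"
  shows "frechet M (\<lambda>\<omega>. X \<omega> C) (ecf M X C)"
proof -
  obtain a where "frechet M (\<lambda>\<omega>. SUP i\<in>{..<1::nat}. ennreal 1 * X \<omega> C) a"
    using X[unfolded max_stable_def, THEN conjunct2, rule_format, of 1 "\<lambda>_. C" "\<lambda>_. 1"] C by auto
  then have a: "frechet M (\<lambda>\<omega>. X \<omega> C) a"
    by (simp add: lessThan_Suc)
  moreover have "frechet M (\<lambda>\<omega>. ext_integral (X \<omega>) (indicator C)) a"
    using a ext_integral_indicator[OF max_stable_sup_measure[OF X] C] by (subst frechet_cong) auto
  then have "ecf M X C = a"
    unfolding ecf_def tdf_def by (blast intro: frechet_unique)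
  ultimately show ?thesis by simp
qed

lemma max_stable_real_frechet:
  assumes X: "max_stable M X" and C: "compact C"
  shows "real_frechet M (\<lambda>\<omega>. enn2real (X \<omega> C)) (ecf M X C)"
proof -
  have f: "frechet M (\<lambda>\<omega>. X \<omega> C) (ecf M X C)"
    using max_stable_frechet_ecf[OF X C] .
  have "X \<omega> C < \<top>" if "\<omega> \<in> space M" for \<omega>
    using sup_measure_compact_finite[OF max_stable_sup_measure[OF X that] C] .
  then have "{\<omega> \<in> space M. enn2real (X \<omega> C) \<le> t} = {\<omega> \<in> space M. X \<omega> C \<le> ennreal t}" if "t > 0" for t
    using that by (auto simp: enn2real_le)
  with f show ?thesis
    unfolding real_frechet_def frechet_def by auto
qed

lemma enn2real_max: "x < \<top> \<Longrightarrow> y < \<top> \<Longrightarrow> enn2real (max x y) = max (enn2real x) (enn2real y)"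
  by (cases x; cases y) (auto simp: max_def)

lemma max_stable_conv_in_prob_iff:
  fixes X :: "'w \<Rightarrow> 'a::{t2_space, second_countable_topology} set \<Rightarrow> ennreal"
  assumes lc: "locally_compact_space (euclidean :: 'a topology)" and "prob_space M"
    and X: "max_stable M X" and K: "compact K" and Ks: "\<And>n. compact (Ks n)"
  shows "conv_in_prob M (\<lambda>n \<omega>. enn2real (X \<omega> (Ks n))) (\<lambda>\<omega>. enn2real (X \<omega> K))
     \<longleftrightarrow> ((\<lambda>n. ecf M X (Ks n)) \<longlonglongrightarrow> ecf M X K \<and> (\<lambda>n. ecf M X (Ks n \<union> K)) \<longlonglongrightarrow> ecf M X K)"
proof -
  interpret prob_space M by fact
  have "enn2real (X \<omega> (Ks n \<union> K)) = max (enn2real (X \<omega> (Ks n))) (enn2real (X \<omega> K))"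
    if "\<omega> \<in> space M" for n \<omega>
  proof -
    have \<phi>: "sup_measure (X \<omega>)" using max_stable_sup_measure[OF X that] .
    show ?thesis
      using sup_measure_Un_compact[OF lc \<phi> Ks K] enn2real_max
        sup_measure_compact_finite[OF \<phi> Ks] sup_measure_compact_finite[OF \<phi> K] by simp
  qed
  then show ?thesis
    using K Ks
    by (intro conv_in_prob_iff_frechet_scales[where W="\<lambda>n \<omega>. enn2real (X \<omega> (Ks n \<union> K))"]
        max_stable_real_frechet[OF X]) auto
qed

theorem mainTheorem17:
  fixes M :: "'w measure"
    and X :: "'w \<Rightarrow> 'a::{t2_space, second_countable_topology} set \<Rightarrow> ennreal"
    and K :: "'a set" and Ks :: "nat \<Rightarrow> 'a set"
  assumes "locally_compact_space (euclidean :: 'a topology)"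
    and "prob_space M"
    and "CRSM M X"
    and "compact K" and "\<forall>n. compact (Ks n)"
  shows "conv_in_prob M (\<lambda>n \<omega>. enn2real (X \<omega> (Ks n))) (\<lambda>\<omega>. enn2real (X \<omega> K))
     \<longleftrightarrow> ((\<lambda>n. ecf M X (Ks n)) \<longlonglongrightarrow> ecf M X K
          \<and> (\<lambda>n. ecf M X (Ks n \<union> K)) \<longlonglongrightarrow> ecf M X K)"
  using max_stable_conv_in_prob_iff[OF assms(1,2) _ assms(4)] assms(3,5)
  unfolding CRSM_def by blast

end
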